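(* The restriction functor $R:\mathbb T({}_H\mathcal M)\to{}_H\mathcal M^{par}$, $R(M,T)=(T(M),\pi_T)$ (acting as the identity on morphisms), is an equivalence of categories.
   Context: Throughout, $k$ is a field and $H$ is a Hopf algebra over $k$ with bijective antipode $S$ and Sweedler notation $\Delta(h)=h_{(1)}\otimes h_{(2)}$. A partial representation of $H$ on a vector space $M$ is a linear map $\pi:H\to\mathrm{End}_k(M)$ satisfying, for all $h,k\in H$: - $\pi(1_H)=\mathrm{id}$; - $\pi(h)\pi(k_{(1)})\pi(S(k_{(2)}))=\pi(hk_{(1)})\pi(S(k_{(2)}))$; - $\pi(h_{(1)})\pi(S(h_{(2)}))\pi(k)=\pi(h_{(1)})\pi(S(h_{(2)})k)$; - $\pi(h)\pi(S(k_{(1)}))\pi(k_{(2)})=\pi(hS(k_{(1)}))\pi(k_{(2)})$; - $\pi(S(h_{(1)}))\pi(h_{(2)})\pi(k)=\pi(S(h_{(1)}))\pi(h_{(2)}k)$. The pair $(M,\pi)$ is then a partial $H$-module. Partial $H$-modules form the category ${}_H\mathcal M^{par}$, whose morphisms are linear maps $f$ with $f\circ\pi(h)=\pi'(h)\circ f$ for all $h$. For a left $H$-module $M$ (action $\triangleright$) and a linear $T:M\to M$, put $T_h(m)=h_{(1)}\triangleright T(S(h_{(2)})\triangleright m)$. A projection $T$ ($T^2=T$) satisfies the c-condition if $T_h\circ T=T\circ T_h$ for all $h\in H$. The category $\mathbb T({}_H\mathcal M)$ is defined as follows: - objects are pairs $(M,T)$ with $M$ a left $H$-module and $T$ a linear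 projection on $M$ satisfying the c-condition; - morphisms $f:(M,T)\to(N,S)$ are linear maps $f:T(M)\to S(N)$ with $f(T(h\triangleright m))=S(h\triangleright f(m))$ for all $h\in H$, $m\in T(M)$. For such $(M,T)$, $\pi_T(h)(m)=T(h\triangleright m)$ ($m\in T(M)$) makes $T(M)$ a partial $H$-module. *)

theory Defs
  imports Complex_Main "HOL-Library.Function_Algebras"
begin

text \<open>
  A k-vector space is an additive group type
  together with a scalar multiplication satisfying vector_space; subspaces are carrier sets.  Since there is no tensor product in the library,
  the comultiplication is given by a list of pairs representing Delta(h) as a finite sum of
  simple tensors (Sweedler notation); all identities in H (x) H and H (x) H (x) H are
  expressed by testing against all bilinear / trilinear forms (over a field, these separate
  the points of the tensor product).
\<close>

definition sweedler :: "('h \<Rightarrow> ('h \<times> 'h) list) \<Rightarrow> 'h \<Rightarrow> ('h \<Rightarrow> 'h \<Rightarrow> 'v::comm_monoid_add) \<Rightarrow> 'v"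
  where "sweedler cop h f = sum_list (map (\<lambda>(a, b). f a b) (cop h))"

definition bilinear_form :: "('k::field \<Rightarrow> 'h::ab_group_add \<Rightarrow> 'h) \<Rightarrow> ('h \<Rightarrow> 'h \<Rightarrow> 'k) \<Rightarrow> bool"
  where "bilinear_form sh \<beta> \<longleftrightarrow>
     (\<forall>a. Vector_Spaces.linear sh (*) (\<beta> a)) \<and> (\<forall>b. Vector_Spaces.linear sh (*) (\<lambda>a. \<beta> a b))"

definition trilinear_form :: "('k::field \<Rightarrow> 'h::ab_group_add \<Rightarrow> 'h) \<Rightarrow> ('h \<Rightarrow> 'h \<Rightarrow> 'h \<Rightarrow> 'k) \<Rightarrow> bool"
  where "trilinear_form sh \<tau> \<longleftrightarrow>
     (\<forall>a b. Vector_Spaces.linear sh (*) (\<tau> a b)) \<and>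
     (\<forall>a c. Vector_Spaces.linear sh (*) (\<lambda>b. \<tau> a b c)) \<and>
     (\<forall>b c. Vector_Spaces.linear sh (*) (\<lambda>a. \<tau> a b c))"

definition hopf_algebra ::
  "('k::field \<Rightarrow> 'h::ring_1 \<Rightarrow> 'h) \<Rightarrow> ('h \<Rightarrow> ('h \<times> 'h) list) \<Rightarrow> ('h \<Rightarrow> 'k) \<Rightarrow> ('h \<Rightarrow> 'h) \<Rightarrow> bool"
  where "hopf_algebra sh cop eps S \<longleftrightarrow>
     \<comment> \<open>k-algebra\<close>
     vector_space sh \<and>
     (\<forall>c a b. sh c (a * b) = sh c a * b \<and> sh c (a * b) = a * sh c b) \<and>
     \<comment> \<open>comultiplication is a linear map H \<rightarrow> H \<otimes> H\<close>
     (\<forall>\<beta>. bilinear_form sh \<beta> \<longrightarrow> Vector_Spaces.linear sh (*) (\<lambda>h. sweedler cop h \<beta>)) \<and>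
     \<comment> \<open>coassociativity\<close>
     (\<forall>\<tau> h. trilinear_form sh \<tau> \<longrightarrow>
        sweedler cop h (\<lambda>a b. sweedler cop a (\<lambda>c d. \<tau> c d b)) =
        sweedler cop h (\<lambda>a b. sweedler cop b (\<lambda>c d. \<tau> a c d))) \<and>
     \<comment> \<open>counit\<close>
     Vector_Spaces.linear sh (*) eps \<and>
     (\<forall>h. sweedler cop h (\<lambda>a b. sh (eps a) b) = h) \<and>
     (\<forall>h. sweedler cop h (\<lambda>a b. sh (eps b) a) = h) \<and>
     \<comment> \<open>comultiplication and counit are algebra maps\<close>
     (\<forall>\<beta>. bilinear_form sh \<beta> \<longrightarrow> sweedler cop 1 \<beta> = \<beta> 1 1) \<and>
     (\<forall>\<beta> h k. bilinear_form sh \<beta> \<longrightarrow>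
        sweedler cop (h * k) \<beta> =
        sweedler cop h (\<lambda>a b. sweedler cop k (\<lambda>c d. \<beta> (a * c) (b * d)))) \<and>
     eps 1 = 1 \<and> (\<forall>h k. eps (h * k) = eps h * eps k) \<and>
     \<comment> \<open>antipode\<close>
     Vector_Spaces.linear sh sh S \<and>
     (\<forall>h. sweedler cop h (\<lambda>a b. S a * b) = sh (eps h) 1) \<and>
     (\<forall>h. sweedler cop h (\<lambda>a b. a * S b) = sh (eps h) 1) \<and>
     \<comment> \<open>bijective antipode\<close>
     bij S"

definition linear_on ::
  "('k::field \<Rightarrow> 'a::ab_group_add \<Rightarrow> 'a) \<Rightarrow> 'a set \<Rightarrow> ('k \<Rightarrow> 'b::ab_group_add \<Rightarrow> 'b) \<Rightarrow> 'b set \<Rightarrow> ('a \<Rightarrow> 'b) \<Rightarrow> bool"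
  where "linear_on s1 A s2 B f \<longleftrightarrow>
     (\<forall>x\<in>A. f x \<in> B) \<and> (\<forall>x\<in>A. \<forall>y\<in>A. f (x + y) = f x + f y) \<and>
     (\<forall>c. \<forall>x\<in>A. f (s1 c x) = s2 c (f x))"

text \<open>Endomorphisms are compared pointwise on V.\<close>

definition partial_module ::
  "('k::field \<Rightarrow> 'h::ring_1 \<Rightarrow> 'h) \<Rightarrow> ('h \<Rightarrow> ('h \<times> 'h) list) \<Rightarrow> ('h \<Rightarrow> 'h) \<Rightarrow>
   ('k \<Rightarrow> 'v::ab_group_add \<Rightarrow> 'v) \<Rightarrow> 'v set \<Rightarrow> ('h \<Rightarrow> 'v \<Rightarrow> 'v) \<Rightarrow> bool"
  where "partial_module sh cop S sv V \<pi> \<longleftrightarrow>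
     vector_space sv \<and> module.subspace sv V \<and>
     (\<forall>h. linear_on sv V sv V (\<pi> h)) \<and>
     (\<forall>x\<in>V. \<forall>h k. \<pi> (h + k) x = \<pi> h x + \<pi> k x) \<and>
     (\<forall>x\<in>V. \<forall>c h. \<pi> (sh c h) x = sv c (\<pi> h x)) \<and>
     (\<forall>x\<in>V. \<pi> 1 x = x) \<and>
     (\<forall>x\<in>V. \<forall>h k.
        sweedler cop k (\<lambda>a b. \<pi> h (\<pi> a (\<pi> (S b) x))) =
        sweedler cop k (\<lambda>a b. \<pi> (h * a) (\<pi> (S b) x))) \<and>
     (\<forall>x\<in>V. \<forall>h k.
        sweedler cop h (\<lambda>a b. \<pi> a (\<pi> (S b) (\<pi> k x))) =
        sweedler cop h (\<lambda>a b. \<pi> a (\<pi> (S b * k) x))) \<and>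
     (\<forall>x\<in>V. \<forall>h k.
        sweedler cop k (\<lambda>a b. \<pi> h (\<pi> (S a) (\<pi> b x))) =
        sweedler cop k (\<lambda>a b. \<pi> (h * S a) (\<pi> b x))) \<and>
     (\<forall>x\<in>V. \<forall>h k.
        sweedler cop h (\<lambda>a b. \<pi> (S a) (\<pi> b (\<pi> k x))) =
        sweedler cop h (\<lambda>a b. \<pi> (S a) (\<pi> (b * k) x)))"

definition partial_module_hom ::
  "('k::field \<Rightarrow> 'v::ab_group_add \<Rightarrow> 'v) \<Rightarrow> 'v set \<Rightarrow> ('h \<Rightarrow> 'v \<Rightarrow> 'v) \<Rightarrow>
   ('k \<Rightarrow> 'w::ab_group_add \<Rightarrow> 'w) \<Rightarrow> 'w set \<Rightarrow> ('h \<Rightarrow> 'w \<Rightarrow> 'w) \<Rightarrow> ('v \<Rightarrow> 'w) \<Rightarrow> bool"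
  where "partial_module_hom sv V \<pi> sw W \<rho> f \<longleftrightarrow>
     linear_on sv V sw W f \<and> (\<forall>h. \<forall>x\<in>V. f (\<pi> h x) = \<rho> h (f x))"

definition partial_module_iso ::
  "('k::field \<Rightarrow> 'v::ab_group_add \<Rightarrow> 'v) \<Rightarrow> 'v set \<Rightarrow> ('h \<Rightarrow> 'v \<Rightarrow> 'v) \<Rightarrow>
   ('k \<Rightarrow> 'w::ab_group_add \<Rightarrow> 'w) \<Rightarrow> 'w set \<Rightarrow> ('h \<Rightarrow> 'w \<Rightarrow> 'w) \<Rightarrow> ('v \<Rightarrow> 'w) \<Rightarrow> bool"
  where "partial_module_iso sv V \<pi> sw W \<rho> f \<longleftrightarrow>
     partial_module_hom sv V \<pi> sw W \<rho> f \<and>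
     (\<exists>g. partial_module_hom sw W \<rho> sv V \<pi> g \<and>
          (\<forall>x\<in>V. g (f x) = x) \<and> (\<forall>y\<in>W. f (g y) = y))"

definition hmodule ::
  "('k::field \<Rightarrow> 'h::ring_1 \<Rightarrow> 'h) \<Rightarrow> ('k \<Rightarrow> 'm::ab_group_add \<Rightarrow> 'm) \<Rightarrow> 'm set \<Rightarrow> ('h \<Rightarrow> 'm \<Rightarrow> 'm) \<Rightarrow> bool"
  where "hmodule sh sm M act \<longleftrightarrow>
     vector_space sm \<and> module.subspace sm M \<and>
     (\<forall>h. linear_on sm M sm M (act h)) \<and>
     (\<forall>x\<in>M. \<forall>h k. act (h + k) x = act h x + act k x) \<and>
     (\<forall>x\<in>M. \<forall>c h. act (sh c h) x = sm c (act h x)) \<and>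
     (\<forall>x\<in>M. act 1 x = x) \<and>
     (\<forall>x\<in>M. \<forall>h k. act (h * k) x = act h (act k x))"

definition Tconj :: "('h \<Rightarrow> ('h \<times> 'h) list) \<Rightarrow> ('h \<Rightarrow> 'h) \<Rightarrow> ('h \<Rightarrow> 'm \<Rightarrow> 'm) \<Rightarrow> ('m \<Rightarrow> 'm)
    \<Rightarrow> 'h \<Rightarrow> 'm \<Rightarrow> 'm::comm_monoid_add"
  where "Tconj cop S act T h m = sweedler cop h (\<lambda>a b. act a (T (act (S b) m)))"

definition T_object ::
  "('k::field \<Rightarrow> 'h::ring_1 \<Rightarrow> 'h) \<Rightarrow> ('h \<Rightarrow> ('h \<times> 'h) list) \<Rightarrow> ('h \<Rightarrow> 'h) \<Rightarrow>
   ('k \<Rightarrow> 'm::ab_group_add \<Rightarrow> 'm) \<Rightarrow> 'm set \<Rightarrow> ('h \<Rightarrow> 'm \<Rightarrow> 'm) \<Rightarrow> ('m \<Rightarrow> 'm) \<Rightarrow> bool"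
  where "T_object sh cop S sm M act T \<longleftrightarrow>
     hmodule sh sm M act \<and> linear_on sm M sm M T \<and> (\<forall>x\<in>M. T (T x) = T x) \<and>
     (\<forall>h. \<forall>x\<in>M. Tconj cop S act T h (T x) = T (Tconj cop S act T h x))"

definition T_hom ::
  "('k::field \<Rightarrow> 'm::ab_group_add \<Rightarrow> 'm) \<Rightarrow> 'm set \<Rightarrow> ('h \<Rightarrow> 'm \<Rightarrow> 'm) \<Rightarrow> ('m \<Rightarrow> 'm) \<Rightarrow>
   ('k \<Rightarrow> 'n::ab_group_add \<Rightarrow> 'n) \<Rightarrow> 'n set \<Rightarrow> ('h \<Rightarrow> 'n \<Rightarrow> 'n) \<Rightarrow> ('n \<Rightarrow> 'n) \<Rightarrow> ('m \<Rightarrow> 'n) \<Rightarrow> bool"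
  where "T_hom sm M act T sn N act' T' f \<longleftrightarrow>
     linear_on sm (T ` M) sn (T' ` N) f \<and>
     (\<forall>h. \<forall>m\<in>T ` M. f (T (act h m)) = T' (act' h (f m)))"

definition piT :: "('h \<Rightarrow> 'm \<Rightarrow> 'm) \<Rightarrow> ('m \<Rightarrow> 'm) \<Rightarrow> 'h \<Rightarrow> 'm \<Rightarrow> 'm"
  where "piT act T h m = T (act h m)"

end

theory Submission
  imports Defs
begin

(* The restriction functor is the identity on morphisms, and a morphism of T(HM) is by
   definition a morphism of partial modules between the restrictions, so R is fully faithful.

   That R(M,T) is a partial module rests on two commutation rules: the c-condition
   T_h T = T T_h, and its twisted companion T'_h T = T T'_h for T'_h(m) = S(h1) T(h2 m).
   The latter follows from h T(m) = T_(h1)(h2 m), a consequence of coassociativity and the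
   antipode and counit axioms.  Each partial representation axiom is one of the two rules.

   For essential surjectivity, a partial module (V, pi) is globalized inside the functions
   H -> V, on which H acts by right translation: M is spanned by the orbit maps
   k |-> pi(k g) v, and T(phi)(k) = pi(k)(phi(1)).  Then T(M) consists of the maps
   k |-> pi(k) v, and evaluation at 1 is an isomorphism onto (V, pi). *)

lemma vector_space_field: "vector_space ((*) :: 'k::field \<Rightarrow> 'k \<Rightarrow> 'k)"
  by unfold_locales (auto simp: algebra_simps)

lemma linear_functional_simps:
  assumes "Vector_Spaces.linear s (*) l"
  shows "l (x + y) = l x + l y" "l (s c x) = c * l x" "l 0 = 0"
proof -
  interpret Vector_Spaces.linear s "(*)" l by fact
  show "l (x + y) = l x + l y" "l (s c x) = c * l x" "l 0 = 0" by (simp_all add: add scale)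
qed

lemma exists_linear_functional_nonzero:
  fixes s :: "'k::field \<Rightarrow> 'm::ab_group_add \<Rightarrow> 'm"
  assumes "vector_space s" and "x \<noteq> 0"
  shows "\<exists>l. Vector_Spaces.linear s (*) l \<and> l x \<noteq> 0"
proof -
  interpret vs: vector_space s by fact
  interpret vector_space_pair s "(*) :: 'k \<Rightarrow> 'k \<Rightarrow> 'k"
    using assms(1) vector_space_field by (simp add: vector_space_pair_def)
  have ind: "vs.independent {x}"
    using \<open>x \<noteq> 0\<close> by (intro vs.independent_insertI) (auto simp: vs.independent_empty)
  show ?thesis
    by (intro exI[of _ "construct {x} (\<lambda>_. 1)"]) (simp add: linear_construct[OF ind] construct_basis[OF ind])
qed

lemma linear_functionals_separate:
  fixes s :: "'k::field \<Rightarrow> 'm::ab_group_add \<Rightarrow> 'm"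
  assumes "vector_space s" and "\<And>l. Vector_Spaces.linear s (*) l \<Longrightarrow> l x = l y"
  shows "x = y"
proof (rule ccontr)
  assume "x \<noteq> y"
  then obtain l where l: "Vector_Spaces.linear s (*) l" "l (x - y) \<noteq> 0"
    using exists_linear_functional_nonzero[OF assms(1), of "x - y"] by auto
  interpret Vector_Spaces.linear s "(*)" l by fact
  from l(2) assms(2)[OF l(1)] show False by (simp add: diff)
qed

lemma sum_list_map_additive_on:
  assumes "\<forall>x\<in>A. \<forall>y\<in>A. g (x + y) = g x + g y" "g 0 = 0" "0 \<in> A" "\<forall>x\<in>A. \<forall>y\<in>A. x + y \<in> A"
    and "\<forall>p\<in>set xs. f p \<in> A"
  shows "g (sum_list (map f xs)) = sum_list (map (\<lambda>p. g (f p)) xs) \<and> sum_list (map f xs) \<in> A"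
  using assms(5) by (induction xs) (auto simp: assms(1-4))

lemma sweedler_additive_on:
  assumes "\<forall>x\<in>A. \<forall>y\<in>A. g (x + y) = g x + g y" "g 0 = 0" "0 \<in> A" "\<forall>x\<in>A. \<forall>y\<in>A. x + y \<in> A"
    and "\<And>a b. F a b \<in> A"
  shows "g (sweedler cop h F) = sweedler cop h (\<lambda>a b. g (F a b))"
  using sum_list_map_additive_on[of A g "cop h" "\<lambda>p. F (fst p) (snd p)"] assms
  by (simp add: sweedler_def split_def)

lemma sweedler_closed:
  assumes "0 \<in> A" "\<forall>x\<in>A. \<forall>y\<in>A. x + y \<in> A" "\<And>a b. F a b \<in> A"
  shows "sweedler cop h F \<in> A"
  using sum_list_map_additive_on[of A id "cop h" "\<lambda>p. F (fst p) (snd p)"] assms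
  by (simp add: sweedler_def split_def)

lemma sweedler_additive:
  assumes "\<And>x y. g (x + y) = g x + g y" "g 0 = 0"
  shows "g (sweedler cop h F) = sweedler cop h (\<lambda>a b. g (F a b))"
  by (rule sweedler_additive_on[of UNIV]) (auto simp: assms)

lemma sweedler_add: "sweedler cop h (\<lambda>a b. F a b + G a b) = sweedler cop h F + sweedler cop h G"
  unfolding sweedler_def by (simp add: split_def sum_list_addf)

lemma sweedler_zero: "sweedler cop h (\<lambda>a b. 0) = 0"
  unfolding sweedler_def by (induction "cop h") auto

lemma sweedler_apply: "sweedler cop h F j = sweedler cop h (\<lambda>a b. F a b j)"
  by (rule sweedler_additive[where g = "\<lambda>\<phi>. \<phi> j"]) simp_all

lemma sweedler_commute:
  fixes F :: "'h \<Rightarrow> 'h \<Rightarrow> 'h \<Rightarrow> 'h \<Rightarrow> 'v::comm_monoid_add"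
  shows "sweedler cop h (\<lambda>a b. sweedler cop k (\<lambda>c d. F a b c d)) =
   sweedler cop k (\<lambda>c d. sweedler cop h (\<lambda>a b. F a b c d))"
proof -
  have "sweedler cop k (F' + G') = sweedler cop k F' + sweedler cop k G'" for F' G' :: "'h \<Rightarrow> 'h \<Rightarrow> 'v"
    using sweedler_add[of cop k F' G'] by (simp add: plus_fun_def)
  moreover have "sweedler cop k 0 = 0"
    using sweedler_zero[of cop k] by (simp add: zero_fun_def)
  ultimately have "sweedler cop k (sweedler cop h F) = sweedler cop h (\<lambda>a b. sweedler cop k (F a b))"
    by (rule sweedler_additive[of "sweedler cop k"])
  moreover have "sweedler cop h F = (\<lambda>c d. sweedler cop h (\<lambda>a b. F a b c d))"
    by (simp add: fun_eq_iff sweedler_apply)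
  ultimately show ?thesis by simp
qed

definition bilinear_map ::
  "('k::field \<Rightarrow> 'h::ab_group_add \<Rightarrow> 'h) \<Rightarrow> ('k \<Rightarrow> 'm::ab_group_add \<Rightarrow> 'm) \<Rightarrow> ('h \<Rightarrow> 'h \<Rightarrow> 'm) \<Rightarrow> bool"
  where "bilinear_map sh s \<Phi> \<longleftrightarrow>
    (\<forall>a a' b. \<Phi> (a + a') b = \<Phi> a b + \<Phi> a' b) \<and> (\<forall>r a b. \<Phi> (sh r a) b = s r (\<Phi> a b)) \<and>
    (\<forall>a b b'. \<Phi> a (b + b') = \<Phi> a b + \<Phi> a b') \<and> (\<forall>r a b. \<Phi> a (sh r b) = s r (\<Phi> a b))"

definition trilinear_map ::
  "('k::field \<Rightarrow> 'h::ab_group_add \<Rightarrow> 'h) \<Rightarrow> ('k \<Rightarrow> 'm::ab_group_add \<Rightarrow> 'm) \<Rightarrow> ('h \<Rightarrow> 'h \<Rightarrow> 'h \<Rightarrow> 'm) \<Rightarrow> bool"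
  where "trilinear_map sh s \<Phi> \<longleftrightarrow>
    (\<forall>a a' b c. \<Phi> (a + a') b c = \<Phi> a b c + \<Phi> a' b c) \<and> (\<forall>r a b c. \<Phi> (sh r a) b c = s r (\<Phi> a b c)) \<and>
    (\<forall>a b b' c. \<Phi> a (b + b') c = \<Phi> a b c + \<Phi> a b' c) \<and> (\<forall>r a b c. \<Phi> a (sh r b) c = s r (\<Phi> a b c)) \<and>
    (\<forall>a b c c'. \<Phi> a b (c + c') = \<Phi> a b c + \<Phi> a b c') \<and> (\<forall>r a b c. \<Phi> a b (sh r c) = s r (\<Phi> a b c))"

locale hopf =
  fixes sh :: "'k::field \<Rightarrow> 'h::ring_1 \<Rightarrow> 'h"
    and cop :: "'h \<Rightarrow> ('h \<times> 'h) list"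
    and eps :: "'h \<Rightarrow> 'k"
    and S :: "'h \<Rightarrow> 'h"
  assumes hopf_algebra: "hopf_algebra sh cop eps S"
begin

lemma vector_space_H: "vector_space sh"
  using hopf_algebra by (simp add: hopf_algebra_def)

lemma scale_mult_left: "sh c (a * b) = sh c a * b"
  and scale_mult_right: "sh c (a * b) = a * sh c b"
  using hopf_algebra unfolding hopf_algebra_def by blast+

lemma counit_left: "sweedler cop h (\<lambda>a b. sh (eps a) b) = h"
  and counit_right: "sweedler cop h (\<lambda>a b. sh (eps b) a) = h"
  using hopf_algebra unfolding hopf_algebra_def by blast+

lemma antipode_left: "sweedler cop h (\<lambda>a b. S a * b) = sh (eps h) 1"
  using hopf_algebra by (simp add: hopf_algebra_def)

lemma antipode_add: "S (a + b) = S a + S b"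
  and antipode_scale: "S (sh c a) = sh c (S a)"
  using hopf_algebra by (simp_all add: hopf_algebra_def Vector_Spaces.linear_iff)

text \<open>The Hopf algebra axioms only speak about scalar-valued multilinear forms; since linear
  functionals separate the points of a vector space, they extend to vector-valued maps.\<close>

lemma coassoc:
  fixes s :: "'k \<Rightarrow> 'm::ab_group_add \<Rightarrow> 'm"
  assumes vs: "vector_space s" and \<Phi>: "trilinear_map sh s \<Phi>"
  shows "sweedler cop h (\<lambda>a b. sweedler cop a (\<lambda>c d. \<Phi> c d b)) =
         sweedler cop h (\<lambda>a b. sweedler cop b (\<lambda>c d. \<Phi> a c d))"
proof (rule linear_functionals_separate[OF vs])
  fix l assume l: "Vector_Spaces.linear s (*) l"
  note l_simps = linear_functional_simps[OF l]
  have "trilinear_form sh (\<lambda>a b c. l (\<Phi> a b c))"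
    using \<Phi> vector_space_H vector_space_field
    unfolding trilinear_form_def Vector_Spaces.linear_iff trilinear_map_def by (simp add: l_simps)
  moreover have "l (sweedler cop h F) = sweedler cop h (\<lambda>a b. l (F a b))" for h F
    by (rule sweedler_additive) (simp_all add: l_simps)
  ultimately show "l (sweedler cop h (\<lambda>a b. sweedler cop a (\<lambda>c d. \<Phi> c d b))) =
         l (sweedler cop h (\<lambda>a b. sweedler cop b (\<lambda>c d. \<Phi> a c d)))"
    using hopf_algebra unfolding hopf_algebra_def by simp
qed

lemma sweedler_linear_arg:
  fixes s :: "'k \<Rightarrow> 'm::ab_group_add \<Rightarrow> 'm"
  assumes vs: "vector_space s" and \<Phi>: "bilinear_map sh s \<Phi>"
  shows sweedler_add_arg: "sweedler cop (x + y) \<Phi> = sweedler cop x \<Phi> + sweedler cop y \<Phi>"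
    and sweedler_scale_arg: "sweedler cop (sh r x) \<Phi> = s r (sweedler cop x \<Phi>)"
proof -
  have "l (sweedler cop (x + y) \<Phi>) = l (sweedler cop x \<Phi> + sweedler cop y \<Phi>) \<and>
        l (sweedler cop (sh r x) \<Phi>) = l (s r (sweedler cop x \<Phi>))"
    if l: "Vector_Spaces.linear s (*) l" for l
  proof -
    note l_simps = linear_functional_simps[OF l]
    have "bilinear_form sh (\<lambda>a b. l (\<Phi> a b))"
      using \<Phi> vector_space_H vector_space_field
      unfolding bilinear_form_def Vector_Spaces.linear_iff bilinear_map_def by (simp add: l_simps)
    then have "Vector_Spaces.linear sh (*) (\<lambda>h. sweedler cop h (\<lambda>a b. l (\<Phi> a b)))"
      using hopf_algebra unfolding hopf_algebra_def by blast
    moreover have "l (sweedler cop h F) = sweedler cop h (\<lambda>a b. l (F a b))" for h F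
      by (rule sweedler_additive) (simp_all add: l_simps)
    ultimately show ?thesis
      unfolding Vector_Spaces.linear_iff by (simp add: l_simps)
  qed
  then show "sweedler cop (x + y) \<Phi> = sweedler cop x \<Phi> + sweedler cop y \<Phi>"
    and "sweedler cop (sh r x) \<Phi> = s r (sweedler cop x \<Phi>)"
    by (auto intro: linear_functionals_separate[OF vs])
qed

lemma sweedler_zero_arg:
  fixes s :: "'k \<Rightarrow> 'm::ab_group_add \<Rightarrow> 'm"
  assumes vs: "vector_space s" and \<Phi>: "bilinear_map sh s \<Phi>"
  shows "sweedler cop 0 \<Phi> = 0"
proof -
  interpret vector_space s by (fact vs)
  interpret H: vector_space sh by (rule vector_space_H)
  have "sweedler cop 0 \<Phi> = sweedler cop (sh 0 0) \<Phi>" by simp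
  also have "\<dots> = s 0 (sweedler cop 0 \<Phi>)" by (rule sweedler_scale_arg[OF vs \<Phi>])
  finally show ?thesis by simp
qed

lemma sweedler_sweedler_arg:
  fixes s :: "'k \<Rightarrow> 'm::ab_group_add \<Rightarrow> 'm"
  assumes vs: "vector_space s" and \<Phi>: "bilinear_map sh s \<Phi>"
  shows "sweedler cop (sweedler cop k F) \<Phi> = sweedler cop k (\<lambda>a b. sweedler cop (F a b) \<Phi>)"
  by (rule sweedler_additive) (simp_all add: sweedler_add_arg[OF vs \<Phi>] sweedler_zero_arg[OF vs \<Phi>])

end

definition Tconj_twisted :: "('h \<Rightarrow> ('h \<times> 'h) list) \<Rightarrow> ('h \<Rightarrow> 'h) \<Rightarrow> ('h \<Rightarrow> 'm \<Rightarrow> 'm) \<Rightarrow> ('m \<Rightarrow> 'm)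
    \<Rightarrow> 'h \<Rightarrow> 'm \<Rightarrow> 'm::comm_monoid_add"
  where "Tconj_twisted cop S act T h m = sweedler cop h (\<lambda>a b. act (S a) (T (act b m)))"

locale c_projection = hopf sh cop eps S
  for sh :: "'k::field \<Rightarrow> 'h::ring_1 \<Rightarrow> 'h" and cop eps S +
  fixes sm :: "'k \<Rightarrow> 'm::ab_group_add \<Rightarrow> 'm" and M act T
  assumes T_object: "T_object sh cop S sm M act T"
begin

lemma vector_space_M: "vector_space sm"
  using T_object by (simp add: T_object_def hmodule_def)

lemma M_zero [simp]: "0 \<in> M"
  and M_add [simp]: "x \<in> M \<Longrightarrow> y \<in> M \<Longrightarrow> x + y \<in> M"
  and M_scale [simp]: "x \<in> M \<Longrightarrow> sm c x \<in> M"
  using T_object vector_space_M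
  by (simp_all add: T_object_def hmodule_def module.subspace_def module_iff_vector_space)

lemma act_closed [simp]: "x \<in> M \<Longrightarrow> act h x \<in> M"
  and act_add [simp]: "x \<in> M \<Longrightarrow> y \<in> M \<Longrightarrow> act h (x + y) = act h x + act h y"
  and act_scale [simp]: "x \<in> M \<Longrightarrow> act h (sm c x) = sm c (act h x)"
  and act_add_left [simp]: "x \<in> M \<Longrightarrow> act (h + k) x = act h x + act k x"
  and act_scale_left [simp]: "x \<in> M \<Longrightarrow> act (sh c h) x = sm c (act h x)"
  and act_one [simp]: "x \<in> M \<Longrightarrow> act 1 x = x"
  and act_mult: "x \<in> M \<Longrightarrow> act (h * k) x = act h (act k x)"
  using T_object by (simp_all add: T_object_def hmodule_def linear_on_def)

lemma T_closed [simp]: "x \<in> M \<Longrightarrow> T x \<in> M"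
  and T_add [simp]: "x \<in> M \<Longrightarrow> y \<in> M \<Longrightarrow> T (x + y) = T x + T y"
  and T_scale [simp]: "x \<in> M \<Longrightarrow> T (sm c x) = sm c (T x)"
  and T_idem [simp]: "x \<in> M \<Longrightarrow> T (T x) = T x"
  and c_condition: "x \<in> M \<Longrightarrow> Tconj cop S act T h (T x) = T (Tconj cop S act T h x)"
  using T_object by (simp_all add: T_object_def linear_on_def)

lemma act_zero [simp]: "act h 0 = 0"
  using act_add[of 0 0 h] by simp

lemma T_zero [simp]: "T 0 = 0"
  using T_add[of 0 0] by simp

lemma act_zero_left [simp]: "x \<in> M \<Longrightarrow> act 0 x = 0"
  using act_add_left[of x 0 0] by simp

lemma sweedler_M [simp]: "(\<And>a b. F a b \<in> M) \<Longrightarrow> sweedler cop h F \<in> M"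
  by (rule sweedler_closed) auto

lemma Tconj_M [simp]: "x \<in> M \<Longrightarrow> Tconj cop S act T h x \<in> M"
  unfolding Tconj_def by simp

lemma Tconj_twisted_M [simp]: "x \<in> M \<Longrightarrow> Tconj_twisted cop S act T h x \<in> M"
  unfolding Tconj_twisted_def by simp

lemma T_sweedler: "(\<And>a b. F a b \<in> M) \<Longrightarrow> T (sweedler cop h F) = sweedler cop h (\<lambda>a b. T (F a b))"
  by (rule sweedler_additive_on[of M]) auto

lemma act_sweedler: "(\<And>a b. F a b \<in> M) \<Longrightarrow> act k (sweedler cop h F) = sweedler cop h (\<lambda>a b. act k (F a b))"
  by (rule sweedler_additive_on[of M]) auto

lemma scale_sweedler: "sm c (sweedler cop h F) = sweedler cop h (\<lambda>a b. sm c (F a b))"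
  using vector_space_M
  by (intro sweedler_additive) (simp_all flip: module_iff_vector_space add: module.scale_right_distrib module.scale_zero_right)

lemma act_sweedler_left: "y \<in> M \<Longrightarrow> act (sweedler cop h F) y = sweedler cop h (\<lambda>a b. act (F a b) y)"
  by (rule sweedler_additive) simp_all

lemma act_T_eq_sweedler_Tconj:
  assumes y: "y \<in> M"
  shows "act h (T y) = sweedler cop h (\<lambda>a b. Tconj cop S act T a (act b y))"
proof -
  have \<Phi>: "trilinear_map sh sm (\<lambda>c d b. act c (T (act (S d) (act b y))))"
    using y unfolding trilinear_map_def by (simp add: antipode_add antipode_scale)
  have "sweedler cop h (\<lambda>a b. Tconj cop S act T a (act b y)) =
        sweedler cop h (\<lambda>a b. sweedler cop a (\<lambda>c d. act c (T (act (S d) (act b y)))))"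
    by (simp add: Tconj_def)
  also have "\<dots> = sweedler cop h (\<lambda>a b. sweedler cop b (\<lambda>c d. act a (T (act (S c) (act d y)))))"
    by (rule coassoc[OF vector_space_M \<Phi>])
  also have "\<dots> = sweedler cop h (\<lambda>a b. act a (T (act (sweedler cop b (\<lambda>c d. S c * d)) y)))"
    using y by (simp add: act_mult act_sweedler_left T_sweedler act_sweedler)
  also have "\<dots> = act (sweedler cop h (\<lambda>a b. sh (eps b) a)) (T y)"
    using y by (simp add: antipode_left act_sweedler_left)
  also have "\<dots> = act h (T y)"
    by (simp add: counit_right)
  finally show ?thesis by simp
qed

lemma T_act_T_eq_sweedler_Tconj:
  assumes "x \<in> M"
  shows "T (act h (T x)) = sweedler cop h (\<lambda>a b. Tconj cop S act T a (T (act b x)))"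
  using assms by (simp add: act_T_eq_sweedler_Tconj T_sweedler c_condition)

lemma Tconj_twisted_c_condition:
  assumes x: "x \<in> M"
  shows "Tconj_twisted cop S act T k (T x) = T (Tconj_twisted cop S act T k x)"
proof -
  define \<Theta> where "\<Theta> = (\<lambda>e f. T (act (S e) (T (act f x))))"
  have \<Theta>_M [simp]: "\<Theta> e f \<in> M" for e f
    using x by (simp add: \<Theta>_def)
  have \<Theta>: "bilinear_map sh sm \<Theta>"
    using x unfolding \<Theta>_def bilinear_map_def by (simp add: antipode_add antipode_scale)
  have act_\<Theta>: "bilinear_map sh sm (\<lambda>e f. act g (\<Theta> e f))" for g
    using \<Theta> unfolding bilinear_map_def by simp
  \<comment> \<open>N a c d = S(a) c . \<Theta>(d_(1), d_(2)); regrouping the legs of k brings S(k_(1)) k_(2)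
      together, which the antipode and counit axioms then collapse.\<close>
  define N where "N = (\<lambda>a c d. sweedler cop d (\<lambda>e f. act (S a * c) (\<Theta> e f)))"
  have N: "trilinear_map sh sm N"
    unfolding trilinear_map_def N_def
    by (simp add: antipode_add antipode_scale distrib_left distrib_right sweedler_add scale_sweedler
        sweedler_linear_arg[OF vector_space_M act_\<Theta>] flip: scale_mult_left scale_mult_right)
  have expand: "act (S a) (T (act b (T x))) = sweedler cop b (\<lambda>c d. N a c d)" for a b
  proof -
    have "trilinear_map sh sm (\<lambda>e f d. act (S a * e) (T (act (S f) (T (act d x)))))"
      using x unfolding trilinear_map_def
      by (simp add: antipode_add antipode_scale distrib_left flip: scale_mult_right)
    note reassoc = coassoc[OF vector_space_M this, of b]
    have "act (S a) (T (act b (T x))) =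
        sweedler cop b (\<lambda>c d. sweedler cop c (\<lambda>e f. act (S a * e) (T (act (S f) (T (act d x))))))"
      unfolding T_act_T_eq_sweedler_Tconj[OF x] using x by (simp add: Tconj_def act_sweedler act_mult)
    with reassoc show ?thesis
      by (simp add: N_def \<Theta>_def)
  qed
  have contract: "sweedler cop a (\<lambda>c d. N c d b) = sweedler cop (sh (eps a) b) \<Theta>" for a b
  proof -
    have "sweedler cop a (\<lambda>c d. N c d b) =
        sweedler cop b (\<lambda>e f. act (sweedler cop a (\<lambda>c d. S c * d)) (\<Theta> e f))"
      unfolding N_def by (subst sweedler_commute) (simp add: act_sweedler_left)
    also have "\<dots> = sweedler cop (sh (eps a) b) \<Theta>"
      by (simp add: antipode_left scale_sweedler sweedler_scale_arg[OF vector_space_M \<Theta>])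
    finally show ?thesis .
  qed
  have "Tconj_twisted cop S act T k (T x) = sweedler cop k (\<lambda>a b. sweedler cop b (\<lambda>c d. N a c d))"
    by (simp add: Tconj_twisted_def expand)
  also have "\<dots> = sweedler cop k (\<lambda>a b. sweedler cop a (\<lambda>c d. N c d b))"
    by (rule coassoc[OF vector_space_M N, symmetric])
  also have "\<dots> = sweedler cop (sweedler cop k (\<lambda>a b. sh (eps a) b)) \<Theta>"
    by (simp add: contract sweedler_sweedler_arg[OF vector_space_M \<Theta>])
  also have "\<dots> = T (Tconj_twisted cop S act T k x)"
    using x by (simp add: counit_left Tconj_twisted_def T_sweedler \<Theta>_def)
  finally show ?thesis .
qed

lemma piT_left_mult:
  assumes x: "x \<in> M" "T x = x"
  shows "sweedler cop k (\<lambda>a b. T (act h (T (act a (T (act (S b) x)))))) =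
         sweedler cop k (\<lambda>a b. T (act (h * a) (T (act (S b) x))))"
proof -
  have "sweedler cop k (\<lambda>a b. T (act h (T (act a (T (act (S b) x)))))) =
        T (act h (T (Tconj cop S act T k x)))"
    using x by (simp add: Tconj_def T_sweedler act_sweedler)
  also have "T (Tconj cop S act T k x) = Tconj cop S act T k x"
    using c_condition[of x k] x by simp
  also have "T (act h (Tconj cop S act T k x)) = sweedler cop k (\<lambda>a b. T (act (h * a) (T (act (S b) x))))"
    using x by (simp add: Tconj_def T_sweedler act_sweedler act_mult)
  finally show ?thesis .
qed

lemma piT_right_mult_S:
  assumes x: "x \<in> M"
  shows "sweedler cop h (\<lambda>a b. T (act a (T (act (S b) (T (act k x)))))) =
         sweedler cop h (\<lambda>a b. T (act a (T (act (S b * k) x))))"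
proof -
  have "sweedler cop h (\<lambda>a b. T (act a (T (act (S b) (T (act k x)))))) =
        T (Tconj cop S act T h (T (act k x)))"
    using x by (simp add: Tconj_def T_sweedler act_sweedler)
  also have "\<dots> = T (Tconj cop S act T h (act k x))"
    using c_condition[of "act k x" h] x by simp
  also have "\<dots> = sweedler cop h (\<lambda>a b. T (act a (T (act (S b * k) x))))"
    using x by (simp add: Tconj_def T_sweedler act_sweedler act_mult)
  finally show ?thesis .
qed

lemma piT_left_mult_S:
  assumes x: "x \<in> M" "T x = x"
  shows "sweedler cop k (\<lambda>a b. T (act h (T (act (S a) (T (act b x)))))) =
         sweedler cop k (\<lambda>a b. T (act (h * S a) (T (act b x))))"
proof -
  have "sweedler cop k (\<lambda>a b. T (act h (T (act (S a) (T (act b x)))))) =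
        T (act h (T (Tconj_twisted cop S act T k x)))"
    using x by (simp add: Tconj_twisted_def T_sweedler act_sweedler)
  also have "T (Tconj_twisted cop S act T k x) = Tconj_twisted cop S act T k x"
    using Tconj_twisted_c_condition[of x k] x by simp
  also have "T (act h (Tconj_twisted cop S act T k x)) =
             sweedler cop k (\<lambda>a b. T (act (h * S a) (T (act b x))))"
    using x by (simp add: Tconj_twisted_def T_sweedler act_sweedler act_mult)
  finally show ?thesis .
qed

lemma piT_right_mult:
  assumes x: "x \<in> M"
  shows "sweedler cop h (\<lambda>a b. T (act (S a) (T (act b (T (act k x)))))) =
         sweedler cop h (\<lambda>a b. T (act (S a) (T (act (b * k) x))))"
proof -
  have "sweedler cop h (\<lambda>a b. T (act (S a) (T (act b (T (act k x)))))) =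
        T (Tconj_twisted cop S act T h (T (act k x)))"
    using x by (simp add: Tconj_twisted_def T_sweedler)
  also have "\<dots> = T (Tconj_twisted cop S act T h (act k x))"
    using Tconj_twisted_c_condition[of "act k x" h] x by simp
  also have "\<dots> = sweedler cop h (\<lambda>a b. T (act (S a) (T (act (b * k) x))))"
    using x by (simp add: Tconj_twisted_def T_sweedler act_mult)
  finally show ?thesis .
qed

lemma image_T_iff: "x \<in> T ` M \<longleftrightarrow> x \<in> M \<and> T x = x"
  by (auto intro: image_eqI[of x T x])

lemma partial_module_piT: "partial_module sh cop S sm (T ` M) (piT act T)"
  unfolding partial_module_def
proof (intro conjI ballI allI)
  show "module.subspace sm (T ` M)"
    using vector_space_M
    by (auto simp: module.subspace_def image_T_iff simp flip: module_iff_vector_space)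
  show "linear_on sm (T ` M) sm (T ` M) (piT act T h)" for h
    unfolding linear_on_def piT_def by (auto simp: image_T_iff)
qed (auto simp: vector_space_M image_T_iff piT_def
      piT_left_mult piT_right_mult_S piT_left_mult_S piT_right_mult)

end

inductive_set glob_space :: "'v::ab_group_add set \<Rightarrow> ('h::ring_1 \<Rightarrow> 'v \<Rightarrow> 'v) \<Rightarrow> ('h \<Rightarrow> 'v) set"
  for V \<pi> where
  zero: "0 \<in> glob_space V \<pi>"
| orbit: "v \<in> V \<Longrightarrow> (\<lambda>k. \<pi> (k * g) v) \<in> glob_space V \<pi>"
| add: "\<phi> \<in> glob_space V \<pi> \<Longrightarrow> \<psi> \<in> glob_space V \<pi> \<Longrightarrow> \<phi> + \<psi> \<in> glob_space V \<pi>"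

definition fun_scale :: "('k \<Rightarrow> 'v \<Rightarrow> 'v) \<Rightarrow> 'k \<Rightarrow> ('h \<Rightarrow> 'v) \<Rightarrow> ('h \<Rightarrow> 'v)"
  where "fun_scale sv c \<phi> = (\<lambda>k. sv c (\<phi> k))"

definition right_translate :: "'h::times \<Rightarrow> ('h \<Rightarrow> 'v) \<Rightarrow> ('h \<Rightarrow> 'v)"
  where "right_translate h \<phi> = (\<lambda>k. \<phi> (k * h))"

definition glob_proj :: "('h::one \<Rightarrow> 'v \<Rightarrow> 'v) \<Rightarrow> ('h \<Rightarrow> 'v) \<Rightarrow> ('h \<Rightarrow> 'v)"
  where "glob_proj \<pi> \<phi> = (\<lambda>k. \<pi> k (\<phi> 1))"

lemma vector_space_fun_scale:
  assumes "vector_space sv"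
  shows "vector_space (fun_scale sv)"
proof -
  interpret vector_space sv by fact
  show ?thesis
    unfolding vector_space_def fun_scale_def by (simp add: fun_eq_iff scale_right_distrib scale_left_distrib)
qed

locale partial_hmodule = hopf sh cop eps S
  for sh :: "'k::field \<Rightarrow> 'h::ring_1 \<Rightarrow> 'h" and cop eps S +
  fixes sv :: "'k \<Rightarrow> 'v::ab_group_add \<Rightarrow> 'v" and V \<pi>
  assumes partial_module: "partial_module sh cop S sv V \<pi>"
begin

lemma vector_space_V: "vector_space sv"
  using partial_module by (simp add: partial_module_def)

lemma V_zero [simp]: "0 \<in> V"
  and V_add [simp]: "x \<in> V \<Longrightarrow> y \<in> V \<Longrightarrow> x + y \<in> V"
  and V_scale [simp]: "x \<in> V \<Longrightarrow> sv c x \<in> V"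
  using partial_module vector_space_V
  by (simp_all add: partial_module_def module.subspace_def module_iff_vector_space)

lemma pi_closed [simp]: "x \<in> V \<Longrightarrow> \<pi> h x \<in> V"
  and pi_add [simp]: "x \<in> V \<Longrightarrow> y \<in> V \<Longrightarrow> \<pi> h (x + y) = \<pi> h x + \<pi> h y"
  and pi_scale [simp]: "x \<in> V \<Longrightarrow> \<pi> h (sv c x) = sv c (\<pi> h x)"
  and pi_add_left [simp]: "x \<in> V \<Longrightarrow> \<pi> (h + k) x = \<pi> h x + \<pi> k x"
  and pi_scale_left [simp]: "x \<in> V \<Longrightarrow> \<pi> (sh c h) x = sv c (\<pi> h x)"
  and pi_one [simp]: "x \<in> V \<Longrightarrow> \<pi> 1 x = x"
  using partial_module by (simp_all add: partial_module_def linear_on_def)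

lemma pi_left_mult: "x \<in> V \<Longrightarrow> sweedler cop k (\<lambda>a b. \<pi> h (\<pi> a (\<pi> (S b) x))) =
        sweedler cop k (\<lambda>a b. \<pi> (h * a) (\<pi> (S b) x))"
  and pi_right_mult_S: "x \<in> V \<Longrightarrow> sweedler cop h (\<lambda>a b. \<pi> a (\<pi> (S b) (\<pi> k x))) =
        sweedler cop h (\<lambda>a b. \<pi> a (\<pi> (S b * k) x))"
  using partial_module unfolding partial_module_def by blast+

lemma pi_zero [simp]: "\<pi> h 0 = 0"
  using pi_add[of 0 0 h] by simp

lemma scale_zero_V [simp]: "sv c 0 = 0"
  using vector_space_V by (simp flip: module_iff_vector_space add: module.scale_zero_right)

lemma sweedler_V [simp]: "(\<And>a b. F a b \<in> V) \<Longrightarrow> sweedler cop h F \<in> V"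
  by (rule sweedler_closed) auto

lemma pi_sweedler: "(\<And>a b. F a b \<in> V) \<Longrightarrow> \<pi> j (sweedler cop h F) = sweedler cop h (\<lambda>a b. \<pi> j (F a b))"
  by (rule sweedler_additive_on[of V]) auto

text \<open>The last conjunct is what makes glob_proj satisfy the c-condition; on the generators
  it follows from the first two partial representation axioms.\<close>

lemma glob_space_props:
  assumes "\<phi> \<in> glob_space V \<pi>"
  shows "(\<forall>x. \<phi> x \<in> V) \<and> (\<forall>x y. \<phi> (x + y) = \<phi> x + \<phi> y) \<and> (\<forall>c x. \<phi> (sh c x) = sv c (\<phi> x)) \<and>
    (\<forall>j h. \<pi> j (sweedler cop h (\<lambda>a b. \<pi> a (\<phi> (S b)))) =
       sweedler cop h (\<lambda>a b. \<pi> (j * a) (\<pi> (S b) (\<phi> 1))))"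
  using assms
proof induction
  case zero
  then show ?case by (simp add: sweedler_zero)
next
  case (orbit v g)
  have "\<pi> j (sweedler cop h (\<lambda>a b. \<pi> a (\<pi> (S b * g) v))) =
        sweedler cop h (\<lambda>a b. \<pi> (j * a) (\<pi> (S b) (\<pi> g v)))" for j h
    using orbit by (simp add: pi_right_mult_S[symmetric] pi_sweedler pi_left_mult)
  then show ?case
    using orbit by (simp add: distrib_right flip: scale_mult_left)
next
  case (add \<phi> \<psi>)
  then show ?case
    using vector_space_V
    by (simp add: sweedler_add pi_sweedler algebra_simps module.scale_right_distrib
        flip: module_iff_vector_space)
qed

lemma glob_space_values [simp]: "\<phi> \<in> glob_space V \<pi> \<Longrightarrow> \<phi> x \<in> V"
  and glob_space_add_arg: "\<phi> \<in> glob_space V \<pi> \<Longrightarrow> \<phi> (x + y) = \<phi> x + \<phi> y"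
  and glob_space_scale_arg: "\<phi> \<in> glob_space V \<pi> \<Longrightarrow> \<phi> (sh c x) = sv c (\<phi> x)"
  and glob_space_Tconj: "\<phi> \<in> glob_space V \<pi> \<Longrightarrow>
    \<pi> j (sweedler cop h (\<lambda>a b. \<pi> a (\<phi> (S b)))) = sweedler cop h (\<lambda>a b. \<pi> (j * a) (\<pi> (S b) (\<phi> 1)))"
  using glob_space_props by blast+

lemma glob_space_fun_scale: "\<phi> \<in> glob_space V \<pi> \<Longrightarrow> fun_scale sv c \<phi> \<in> glob_space V \<pi>"
proof (induction rule: glob_space.induct)
  case zero
  then show ?case by (simp add: fun_scale_def glob_space.zero flip: zero_fun_def)
next
  case (orbit v g)
  then show ?case using glob_space.orbit[of "sv c v" V \<pi> g] by (simp add: fun_scale_def)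
next
  case (add \<phi> \<psi>)
  have "fun_scale sv c (\<phi> + \<psi>) = fun_scale sv c \<phi> + fun_scale sv c \<psi>"
    using vector_space_V
    by (simp add: fun_scale_def fun_eq_iff module.scale_right_distrib flip: module_iff_vector_space)
  then show ?case using add by (metis glob_space.add)
qed

lemma glob_space_right_translate: "\<phi> \<in> glob_space V \<pi> \<Longrightarrow> right_translate h \<phi> \<in> glob_space V \<pi>"
proof (induction rule: glob_space.induct)
  case zero
  then show ?case by (simp add: right_translate_def glob_space.zero flip: zero_fun_def)
next
  case (orbit v g)
  then show ?case using glob_space.orbit[of v V \<pi> "h * g"] by (simp add: right_translate_def mult.assoc)
next
  case (add \<phi> \<psi>)
  have "right_translate h (\<phi> + \<psi>) = right_translate h \<phi> + right_translate h \<psi>"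
    by (simp add: right_translate_def fun_eq_iff)
  then show ?case using add by (metis glob_space.add)
qed

lemma glob_space_glob_proj: "\<phi> \<in> glob_space V \<pi> \<Longrightarrow> glob_proj \<pi> \<phi> \<in> glob_space V \<pi>"
  using glob_space.orbit[of "\<phi> 1" V \<pi> 1] by (simp add: glob_proj_def)

lemma T_object_globalization:
  "T_object sh cop S (fun_scale sv) (glob_space V \<pi>) right_translate (glob_proj \<pi>)"
proof -
  have "module (fun_scale sv)"
    using vector_space_fun_scale[OF vector_space_V] by (simp add: module_iff_vector_space)
  then have subspace: "module.subspace (fun_scale sv) (glob_space V \<pi>)"
    unfolding module.subspace_def[OF \<open>module (fun_scale sv)\<close>]
    by (auto intro: glob_space.zero glob_space.add glob_space_fun_scale)
  have "hmodule sh (fun_scale sv) (glob_space V \<pi>) right_translate"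
    unfolding hmodule_def
  proof (intro conjI ballI allI)
    show "linear_on (fun_scale sv) (glob_space V \<pi>) (fun_scale sv) (glob_space V \<pi>) (right_translate h)" for h
      using glob_space_right_translate
      by (auto simp: linear_on_def right_translate_def fun_scale_def)
  qed (auto simp: vector_space_fun_scale[OF vector_space_V] subspace right_translate_def fun_scale_def
      fun_eq_iff glob_space_add_arg glob_space_scale_arg distrib_left mult.assoc simp flip: scale_mult_right)
  then show ?thesis
    unfolding T_object_def
    using glob_space_glob_proj
    by (auto simp: linear_on_def glob_proj_def fun_scale_def fun_eq_iff Tconj_def sweedler_apply
        right_translate_def glob_space_Tconj)
qed

lemma image_glob_proj: "glob_proj \<pi> ` glob_space V \<pi> = (\<lambda>v k. \<pi> k v) ` V"
proof
  show "(\<lambda>v k. \<pi> k v) ` V \<subseteq> glob_proj \<pi> ` glob_space V \<pi>"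
  proof
    fix \<psi> assume "\<psi> \<in> (\<lambda>v k. \<pi> k v) ` V"
    then obtain v where v: "v \<in> V" "\<psi> = (\<lambda>k. \<pi> k v)" by blast
    then have "\<psi> = glob_proj \<pi> (\<lambda>k. \<pi> (k * 1) v)"
      by (simp add: glob_proj_def)
    with glob_space.orbit[OF v(1)] show "\<psi> \<in> glob_proj \<pi> ` glob_space V \<pi>" by blast
  qed
qed (auto simp: glob_proj_def)

lemma partial_module_iso_globalization:
  "partial_module_iso (fun_scale sv) (glob_proj \<pi> ` glob_space V \<pi>) (piT right_translate (glob_proj \<pi>))
     sv V \<pi> (\<lambda>\<phi>. \<phi> 1)"
  unfolding partial_module_iso_def partial_module_hom_def image_glob_proj
  by (intro conjI exI[of _ "\<lambda>v k. \<pi> k v"])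
    (auto simp: linear_on_def fun_scale_def fun_eq_iff piT_def right_translate_def glob_proj_def)

end

theorem mainTheorem2:
  fixes sh :: "'k::field \<Rightarrow> 'h::ring_1 \<Rightarrow> 'h"
    and cop :: "'h \<Rightarrow> ('h \<times> 'h) list"
    and eps :: "'h \<Rightarrow> 'k"
    and S :: "'h \<Rightarrow> 'h"
  assumes hopf: "hopf_algebra sh cop eps S"
  shows
    \<comment> \<open>R is well defined on objects: R(M,T) is a partial H-module\<close>
    "(\<forall>(sm :: 'k \<Rightarrow> 'm::ab_group_add \<Rightarrow> 'm) M act T.
        T_object sh cop S sm M act T \<longrightarrow> partial_module sh cop S sm (T ` M) (piT act T))
     \<and>
     \<comment> \<open>R (identity on morphisms) is well defined on morphisms and full; it is faithful
         since it is the identity on morphisms\<close>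
     (\<forall>(sm :: 'k \<Rightarrow> 'm \<Rightarrow> 'm) M act T (sn :: 'k \<Rightarrow> 'n::ab_group_add \<Rightarrow> 'n) N act' T' f.
        T_object sh cop S sm M act T \<longrightarrow> T_object sh cop S sn N act' T' \<longrightarrow>
        (T_hom sm M act T sn N act' T' f \<longleftrightarrow>
         partial_module_hom sm (T ` M) (piT act T) sn (T' ` N) (piT act' T') f))
     \<and>
     \<comment> \<open>R is essentially surjective\<close>
     (\<forall>(sv :: 'k \<Rightarrow> 'v::ab_group_add \<Rightarrow> 'v) V \<pi>.
        partial_module sh cop S sv V \<pi> \<longrightarrow>
        (\<exists>(sm :: 'k \<Rightarrow> ('h \<Rightarrow> 'v) \<Rightarrow> ('h \<Rightarrow> 'v)) M act T f.
           T_object sh cop S sm M act T \<and>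
           partial_module_iso sm (T ` M) (piT act T) sv V \<pi> f))"
proof (intro conjI allI impI)
  fix sm :: "'k \<Rightarrow> 'm \<Rightarrow> 'm" and M act T
  assume "T_object sh cop S sm M act T"
  with hopf interpret c_projection sh cop eps S sm M act T
    by (simp add: c_projection_def c_projection_axioms_def hopf_def)
  show "partial_module sh cop S sm (T ` M) (piT act T)"
    by (rule partial_module_piT)
next
  fix sm :: "'k \<Rightarrow> 'm \<Rightarrow> 'm" and M act T and sn :: "'k \<Rightarrow> 'n \<Rightarrow> 'n" and N act' T' f
  show "T_hom sm M act T sn N act' T' f \<longleftrightarrow>
        partial_module_hom sm (T ` M) (piT act T) sn (T' ` N) (piT act' T') f"
    by (simp add: T_hom_def partial_module_hom_def piT_def)
next
  fix sv :: "'k \<Rightarrow> 'v \<Rightarrow> 'v" and V \<pi>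
  assume "partial_module sh cop S sv V \<pi>"
  with hopf interpret partial_hmodule sh cop eps S sv V \<pi>
    by (simp add: partial_hmodule_def partial_hmodule_axioms_def hopf_def)
  show "\<exists>(sm :: 'k \<Rightarrow> ('h \<Rightarrow> 'v) \<Rightarrow> ('h \<Rightarrow> 'v)) M act T f.
          T_object sh cop S sm M act T \<and> partial_module_iso sm (T ` M) (piT act T) sv V \<pi> f"
    using T_object_globalization partial_module_iso_globalization by blast
qed

end
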